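(* Fix $p\in[0,1]$, and let $C=\{(i,j)\in\mathcal{L}:i\in\{0,1\},\ j<0\}$. Let $A\supset B$ be infinite subsets of $C$. Then for every $n\ge0$, $$\mathbb{E}_p\big[u^n_{B\cup\{o\}}-u^n_B\big]\ge\mathbb{E}_p\big[u^n_{A\cup\{o\}}-u^n_A\big]\ge 2p.$$
   Context: Let $\mathcal{L}=\{(n,m)\in\mathbb{Z}^2:n\ge0,\ n+m\text{ even}\}$. Under $\mathbb{P}_p$, each site of $\mathcal{L}$ is independently open with probability $p$ and closed otherwise. For $z,z'\in\mathcal{L}$ write $z\to z'$ if there exist $k\ge0$ and sites $z=z_0,\dots,z_k=z'$ of $\mathcal{L}$ such that $z_0,\dots,z_{k-1}$ are open and $z_{i+1}-z_i\in\{(1,1),(2,0),(1,-1)\}$ for every $i$. Let $o=(0,0)$. For a set $A\subset\mathcal{L}$, let $\xi^n_A=\{x:z\to(n,x)\text{ for some }z\in A\}$ and $u^n_A=\sup\xi^n_A$, with $\sup\emptyset=-\infty$. *)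

theory Defs
  imports "HOL-Probability.Probability"
begin

definition Lat :: "(int \<times> int) set" where
  "Lat = {(n, m). n \<ge> 0 \<and> even (n + m)}"

definition step_ok :: "int \<times> int \<Rightarrow> int \<times> int \<Rightarrow> bool" where
  "step_ok z w \<longleftrightarrow> (fst w - fst z, snd w - snd z) \<in> {(1, 1), (2, 0), (1, -1)}"

definition reach :: "(int \<times> int \<Rightarrow> bool) \<Rightarrow> int \<times> int \<Rightarrow> int \<times> int \<Rightarrow> bool" where
  "reach \<omega> z z' \<longleftrightarrow> (\<exists>zs. zs \<noteq> [] \<and> hd zs = z \<and> last zs = z' \<and> set zs \<subseteq> Lat \<and>
      (\<forall>i. i + 1 < length zs \<longrightarrow> \<omega> (zs ! i) \<and> step_ok (zs ! i) (zs ! (i + 1))))"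

definition xi :: "(int \<times> int \<Rightarrow> bool) \<Rightarrow> (int \<times> int) set \<Rightarrow> nat \<Rightarrow> int set" where
  "xi \<omega> A n = {x. \<exists>z\<in>A. reach \<omega> z (int n, x)}"

text \<open>u^n_A = sup xi^n_A, with sup of the empty set = -\<infinity> (Sup in ereal).\<close>
definition u :: "(int \<times> int \<Rightarrow> bool) \<Rightarrow> (int \<times> int) set \<Rightarrow> nat \<Rightarrow> ereal" where
  "u \<omega> A n = Sup ((\<lambda>x. ereal (real_of_int x)) ` xi \<omega> A n)"

text \<open>The nonnegative increment u^n_{A \<union> {o}} - u^n_A, with the conventions
  (-\<infinity>) - (-\<infinity>) = 0 and a - (-\<infinity>) = \<infinity> for a > -\<infinity>.\<close>
definition incr :: "(int \<times> int \<Rightarrow> bool) \<Rightarrow> (int \<times> int) set \<Rightarrow> nat \<Rightarrow> ennreal" where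
  "incr \<omega> A n =
     (if u \<omega> A n = -\<infinity> then (if u \<omega> (A \<union> {(0, 0)}) n = -\<infinity> then 0 else \<infinity>)
      else e2ennreal (u \<omega> (A \<union> {(0, 0)}) n - u \<omega> A n))"

definition perc :: "real \<Rightarrow> (int \<times> int \<Rightarrow> bool) measure" where
  "perc p = PiM Lat (\<lambda>_. measure_pmf (bernoulli_pmf p))"

definition Cset :: "(int \<times> int) set" where
  "Cset = {(i, j) \<in> Lat. i \<in> {0, 1} \<and> j < 0}"

end

theory Submission
  imports Defs
begin

text \<open>
  Since \<open>max(u_A, u_o) - u_A\<close> decreases as \<open>u_A\<close> grows, the increments are pointwise antitone
  in \<open>A \<subseteq> C\<close>, and it suffices to bound the increment for \<open>A = C\<close> from below.
  For \<open>n \<ge> 1\<close> the origin acts only through its three successors, so this increment is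
  \<open>1[o open] \<cdot> \<Phi>\<close> with \<open>\<Phi>\<close> not depending on the state of \<open>o\<close>; independence gives mean \<open>p \<cdot> E \<Phi>\<close>.
  Shifting \<open>C\<close> up by two rows yields \<open>C \<union> {o, (1,1)}\<close>, whose front lies below that of
  \<open>C \<union> succ(o)\<close>; hence \<open>\<Phi> \<ge> u_C \<circ> \<theta> + 2 - u_C\<close>, where \<open>\<theta>\<close> shifts the configuration.
  As \<open>\<theta>\<close> preserves the measure, this difference has mean \<open>2\<close>, provided \<open>u_C\<close> is not too
  negative: truncating at \<open>-2K\<close> costs at most \<open>2(1 - p^n)^K\<close>, since one open diagonal among
  \<open>K\<close> disjoint ones already forces \<open>u_C \<ge> -2K\<close>. For \<open>n = 0\<close> the increment is at least \<open>2\<close>.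
\<close>

section \<open>Open paths\<close>

inductive reachable :: "(int \<times> int \<Rightarrow> bool) \<Rightarrow> int \<times> int \<Rightarrow> int \<times> int \<Rightarrow> bool" for \<omega> where
  refl: "z \<in> Lat \<Longrightarrow> reachable \<omega> z z"
| step: "z \<in> Lat \<Longrightarrow> \<omega> z \<Longrightarrow> step_ok z z' \<Longrightarrow> reachable \<omega> z' w \<Longrightarrow> reachable \<omega> z w"

lemma reachable_if_reach:
  assumes "zs \<noteq> []" "hd zs = z" "last zs = w" "set zs \<subseteq> Lat"
    "\<forall>i. i + 1 < length zs \<longrightarrow> \<omega> (zs ! i) \<and> step_ok (zs ! i) (zs ! (i + 1))"
  shows "reachable \<omega> z w"
  using assms
proof (induction zs arbitrary: z)
  case Nil
  then show ?case by simp
next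
  case (Cons a zs)
  show ?case
  proof (cases "zs = []")
    case True
    then show ?thesis using Cons.prems by (auto intro: reachable.refl)
  next
    case False
    have "\<omega> a" "step_ok a (hd zs)"
      using Cons.prems(5)[rule_format, of 0] False by (auto simp: hd_conv_nth)
    moreover have "reachable \<omega> (hd zs) w"
    proof (rule Cons.IH[OF False HOL.refl])
      show "last zs = w" "set zs \<subseteq> Lat" using Cons.prems False by auto
      show "\<forall>i. i + 1 < length zs \<longrightarrow> \<omega> (zs ! i) \<and> step_ok (zs ! i) (zs ! (i + 1))"
        using Cons.prems(5) by (metis Suc_eq_plus1 length_Cons not_less_eq nth_Cons_Suc)
    qed
    ultimately show ?thesis using Cons.prems by (auto intro: reachable.step)
  qed
qed

lemma reach_if_reachable:
  assumes "reachable \<omega> z w"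
  shows "reach \<omega> z w"
  using assms unfolding reach_def
proof induction
  case (refl z)
  then show ?case by (intro exI[of _ "[z]"]) auto
next
  case (step z z' w)
  then obtain zs where zs: "zs \<noteq> []" "hd zs = z'" "last zs = w" "set zs \<subseteq> Lat"
      "\<forall>i. i + 1 < length zs \<longrightarrow> \<omega> (zs ! i) \<and> step_ok (zs ! i) (zs ! (i + 1))" by blast
  have "\<omega> ((z # zs) ! i) \<and> step_ok ((z # zs) ! i) ((z # zs) ! (i + 1))"
    if "i + 1 < length (z # zs)" for i
    using step zs zs(5)[rule_format, of "i - 1"] that by (cases i) (auto simp: hd_conv_nth)
  then show ?case using step zs by (intro exI[of _ "z # zs"]) auto
qed

lemma reach_iff_reachable: "reach \<omega> z w \<longleftrightarrow> reachable \<omega> z w"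
  using reachable_if_reach reach_if_reachable unfolding reach_def by metis

lemma step_ok_iff:
  "step_ok z z' \<longleftrightarrow> z' = (fst z + 1, snd z + 1) \<or> z' = (fst z + 2, snd z) \<or> z' = (fst z + 1, snd z - 1)"
  unfolding step_ok_def by (cases z; cases z') auto

lemma reachable_bounds:
  assumes "reachable \<omega> z w"
  shows "fst z \<le> fst w \<and> snd w - snd z \<le> fst w - fst z \<and> (fst w = fst z \<longrightarrow> w = z)"
  using assms by induction (auto simp: step_ok_iff)

lemma reachable_from_succ:
  assumes "reachable \<omega> z w" "w \<noteq> z"
  shows "\<omega> z \<and> (\<exists>z'. step_ok z z' \<and> reachable \<omega> z' w)"
  using assms by (cases rule: reachable.cases) auto

lemma reachable_local:
  assumes "reachable \<omega> z w" "\<And>t. t = z \<or> fst z < fst t \<Longrightarrow> \<omega>' t = \<omega> t"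
  shows "reachable \<omega>' z w"
  using assms
proof induction
  case (refl z)
  then show ?case by (simp add: reachable.refl)
next
  case (step z z' w)
  have "reachable \<omega>' z' w"
    using step.prems step.hyps(3) by (intro step.IH) (auto simp: step_ok_iff)
  then show ?case using step by (intro reachable.step[of z \<omega>' z']) auto
qed

lemma Lat_shift: "(a, b + 2) \<in> Lat \<longleftrightarrow> (a, b) \<in> Lat"
  unfolding Lat_def by auto

definition vshift :: "(int \<times> int \<Rightarrow> bool) \<Rightarrow> int \<times> int \<Rightarrow> bool" where
  "vshift \<omega> = (\<lambda>s\<in>Lat. \<omega> (fst s, snd s + 2))"

lemma reachable_vshift_up:
  assumes "reachable (vshift \<omega>) z w"
  shows "reachable \<omega> (fst z, snd z + 2) (fst w, snd w + 2)"
  using assms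
proof induction
  case (refl z)
  then show ?case using Lat_shift[of "fst z" "snd z"] by (auto intro: reachable.refl)
next
  case (step z z' w)
  have "(fst z, snd z + 2) \<in> Lat" using step.hyps(1) Lat_shift[of "fst z" "snd z"] by simp
  then show ?case using step by (intro reachable.step[OF _ _ _ step.IH]) (auto simp: vshift_def step_ok_iff)
qed

lemma reachable_vshift_down:
  assumes "reachable \<omega> z w"
  shows "reachable (vshift \<omega>) (fst z, snd z - 2) (fst w, snd w - 2)"
  using assms
proof induction
  case (refl z)
  then show ?case using Lat_shift[of "fst z" "snd z - 2"] by (auto intro: reachable.refl)
next
  case (step z z' w)
  have "(fst z, snd z - 2) \<in> Lat" using step.hyps(1) Lat_shift[of "fst z" "snd z - 2"] by simp
  then show ?case using step by (intro reachable.step[OF _ _ _ step.IH]) (auto simp: vshift_def step_ok_iff)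
qed

lemma reachable_vshift_iff:
  "reachable (vshift \<omega>) (a, b) (c, d) \<longleftrightarrow> reachable \<omega> (a, b + 2) (c, d + 2)"
  using reachable_vshift_up[of \<omega> "(a, b)" "(c, d)"] reachable_vshift_down[of \<omega> "(a, b + 2)" "(c, d + 2)"]
  by auto

lemma reachable_diagonal:
  assumes "even j" "\<And>i. 0 \<le> i \<Longrightarrow> i < int n \<Longrightarrow> \<omega> (i, j + i)"
  shows "reachable \<omega> (0, j) (int n, j + int n)"
proof -
  have "reachable \<omega> (int n - int m, j + int n - int m) (int n, j + int n)" if "m \<le> n" for m
    using that
  proof (induction m)
    case 0
    have "(int n, j + int n) \<in> Lat" using assms(1) unfolding Lat_def by auto
    then show ?case by (simp add: reachable.refl)
  next
    case (Suc m)
    have "(int n - int (Suc m), j + int n - int (Suc m)) \<in> Lat"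
      using Suc.prems assms(1) unfolding Lat_def by auto
    moreover have "\<omega> (int n - int (Suc m), j + int n - int (Suc m))"
      using assms(2)[of "int n - int (Suc m)"] Suc.prems by (simp add: algebra_simps)
    moreover have "step_ok (int n - int (Suc m), j + int n - int (Suc m)) (int n - int m, j + int n - int m)"
      unfolding step_ok_def by simp
    ultimately show ?case using reachable.step Suc by simp
  qed
  from this[of n] show ?thesis by simp
qed

section \<open>Fronts and their increments\<close>

definition gap :: "ereal \<Rightarrow> ereal \<Rightarrow> ennreal" where
  "gap a b = (if a = -\<infinity> then (if b = -\<infinity> then 0 else \<infinity>) else e2ennreal (b - a))"

lemma incr_eq_gap: "incr \<omega> A n = gap (u \<omega> A n) (u \<omega> (A \<union> {(0, 0)}) n)"
  unfolding incr_def gap_def by simp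

lemma gap_self: "a < \<infinity> \<Longrightarrow> gap a a = 0"
  unfolding gap_def by (cases a) auto

lemma gap_mono:
  assumes "a \<le> b'" "b' \<le> b" "b < \<infinity>"
  shows "gap a b' \<le> gap a b"
proof (cases "a = -\<infinity>")
  case True
  then show ?thesis using assms unfolding gap_def by auto
next
  case False
  then have "b' \<noteq> -\<infinity>" "b \<noteq> -\<infinity>" "b' - a \<le> b - a"
    using assms by (auto simp: ereal_minus_mono)
  then show ?thesis using False unfolding gap_def by (simp add: e2ennreal_mono)
qed

lemma gap_max_antimono:
  assumes "a \<le> a'" "a' < \<infinity>" "c < \<infinity>"
  shows "gap a' (max a' c) \<le> gap a (max a c)"
proof (cases a)
  case MInf
  then show ?thesis using assms unfolding gap_def by (cases a'; cases c) auto
next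
  case (real x)
  then obtain x' where x': "a' = ereal x'" "x \<le> x'" using assms by (cases a') auto
  show ?thesis
  proof (cases c)
    case (real r)
    have "e2ennreal (ereal (max x' r - x')) \<le> e2ennreal (ereal (max x r - x))"
      by (rule e2ennreal_mono) (use x' in auto)
    moreover have "max (ereal x') (ereal r) - ereal x' = ereal (max x' r - x')"
      "max (ereal x) (ereal r) - ereal x = ereal (max x r - x)"
      by (auto simp: max_def)
    ultimately show ?thesis using \<open>a = ereal x\<close> x' real unfolding gap_def
      by (simp del: e2ennreal_ereal)
  qed (use assms \<open>a = ereal x\<close> x' in \<open>auto simp: gap_def\<close>)
qed (use assms in auto)

lemma gap_lower_bound:
  assumes "a + ereal c \<le> b" "b \<noteq> -\<infinity>" "0 \<le> c"
  shows "ennreal c \<le> gap a b"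
proof (cases a)
  case (real x)
  then show ?thesis
  proof (cases b)
    case (real r)
    then show ?thesis using assms \<open>a = ereal x\<close> unfolding gap_def by (auto intro: ennreal_leI)
  qed (use assms in \<open>auto simp: gap_def\<close>)
qed (use assms in \<open>auto simp: gap_def\<close>)

lemma xi_reachable: "xi \<omega> A n = {x. \<exists>z\<in>A. reachable \<omega> z (int n, x)}"
  unfolding xi_def reach_iff_reachable ..

lemma u_Un: "u \<omega> (A \<union> B) n = max (u \<omega> A n) (u \<omega> B n)"
  unfolding u_def xi_def by (simp add: Collect_disj_eq bex_Un image_Un Sup_union_distrib sup_max)

lemma u_mono: "A \<subseteq> B \<Longrightarrow> u \<omega> A n \<le> u \<omega> B n"
  unfolding u_def xi_def by (rule Sup_subset_mono) auto

lemma u_upper: "z \<in> A \<Longrightarrow> reachable \<omega> z (int n, x) \<Longrightarrow> ereal (real_of_int x) \<le> u \<omega> A n"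
  unfolding u_def xi_reachable by (rule Sup_upper) auto

lemma u_le:
  assumes "\<And>z. z \<in> A \<Longrightarrow> 0 \<le> fst z \<and> snd z \<le> c"
  shows "u \<omega> A n \<le> ereal (real_of_int (c + int n))"
  unfolding u_def xi_reachable
proof (rule Sup_least, clarsimp)
  fix x a b
  assume "(a, b) \<in> A" "reachable \<omega> (a, b) (int n, x)"
  then have "0 \<le> a" "b \<le> c" "x - b \<le> int n - a"
    using assms[of "(a, b)"] reachable_bounds[of \<omega> "(a, b)"] by auto
  then show "real_of_int x \<le> real_of_int c + real n" by linarith
qed

lemma u_less_top:
  assumes "\<And>z. z \<in> A \<Longrightarrow> 0 \<le> fst z \<and> snd z \<le> c"
  shows "u \<omega> A n < \<infinity>"
proof -
  have "u \<omega> A n \<le> ereal (real_of_int (c + int n))"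
    using assms by (rule u_le)
  moreover have "ereal (real_of_int (c + int n)) < \<infinity>" by simp
  ultimately show ?thesis by (rule le_less_trans)
qed

lemma u_singleton:
  assumes "z \<in> Lat" "fst z < int n"
  shows "u \<omega> {z} n = (if \<omega> z then u \<omega> {z'. step_ok z z'} n else -\<infinity>)"
proof -
  have "reachable \<omega> z (int n, x) \<longleftrightarrow> \<omega> z \<and> (\<exists>z'. step_ok z z' \<and> reachable \<omega> z' (int n, x))" for x
  proof -
    have "(int n, x) \<noteq> z" using assms(2) by auto
    then show ?thesis using assms(1) reachable_from_succ[of \<omega> z] by (auto intro: reachable.step)
  qed
  then have "xi \<omega> {z} n = (if \<omega> z then xi \<omega> {z'. step_ok z z'} n else {})"
    by (auto simp: xi_reachable)
  then show ?thesis by (simp add: u_def bot_ereal_def)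
qed

lemma u_fun_upd:
  assumes "\<And>z. z \<in> A \<Longrightarrow> z \<noteq> s \<and> fst s \<le> fst z"
  shows "u (fun_upd \<omega> s b) A n = u \<omega> A n"
proof -
  have "reachable (fun_upd \<omega> s b) z w \<longleftrightarrow> reachable \<omega> z w" if "z \<in> A" for z w
  proof -
    have "t = z \<or> fst z < fst t \<Longrightarrow> t \<noteq> s" for t
      using assms[OF that] by auto
    then show ?thesis
      using reachable_local[of "fun_upd \<omega> s b" z w \<omega>] reachable_local[of \<omega> z w "fun_upd \<omega> s b"]
      by auto
  qed
  then show ?thesis unfolding u_def xi_reachable by auto
qed

abbreviation shift_up :: "(int \<times> int) set \<Rightarrow> (int \<times> int) set" where
  "shift_up A \<equiv> (\<lambda>(a, b). (a, b + 2)) ` A"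

lemma u_shift_up: "u \<omega> (shift_up A) n = u (vshift \<omega>) A n + 2"
proof -
  let ?S = "xi (vshift \<omega>) A n"
  have xi_eq: "xi \<omega> (shift_up A) n = (\<lambda>x. x + 2) ` ?S"
  proof (intro set_eqI iffI)
    fix x
    assume "x \<in> xi \<omega> (shift_up A) n"
    then obtain a b where "(a, b) \<in> A" "reachable (vshift \<omega>) (a, b) (int n, x - 2)"
      unfolding xi_reachable reachable_vshift_iff by auto
    then show "x \<in> (\<lambda>x. x + 2) ` ?S" unfolding xi_reachable by force
  next
    fix x
    assume "x \<in> (\<lambda>x. x + 2) ` ?S"
    then obtain y a b where "x = y + 2" "(a, b) \<in> A" "reachable (vshift \<omega>) (a, b) (int n, y)"
      unfolding xi_reachable by auto
    then show "x \<in> xi \<omega> (shift_up A) n" unfolding xi_reachable reachable_vshift_iff by force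
  qed
  have "u \<omega> (shift_up A) n = (SUP x\<in>?S. ereal (real_of_int x) + 2)"
    unfolding u_def xi_eq image_image by (simp add: add.commute)
  also have "\<dots> = u (vshift \<omega>) A n + 2"
  proof (cases "?S = {}")
    case True
    then show ?thesis unfolding u_def by (simp add: bot_ereal_def)
  next
    case False
    then show ?thesis unfolding u_def by (rule SUP_ereal_add_left) simp
  qed
  finally show ?thesis .
qed

lemma origin_Lat: "(0, 0) \<in> Lat"
  unfolding Lat_def by auto

lemma Cset_iff: "(a, b) \<in> Cset \<longleftrightarrow> (a = 0 \<or> a = 1) \<and> b < 0 \<and> even (a + b)"
  unfolding Cset_def Lat_def by auto

lemma Cset_bound: "z \<in> Cset \<Longrightarrow> 0 \<le> fst z \<and> snd z \<le> 0"
  by (cases z) (auto simp: Cset_iff)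

lemma shift_up_Cset: "shift_up Cset = insert (0, 0) (insert (1, 1) Cset)"
proof (intro set_eqI iffI)
  fix z
  assume "z \<in> shift_up Cset"
  then obtain a b where "z = (a, b + 2)" "(a, b) \<in> Cset" by auto
  moreover have "(a = 0 \<and> b + 2 = 0) \<or> (a = 1 \<and> b + 2 = 1) \<or> (a, b + 2) \<in> Cset"
    using \<open>(a, b) \<in> Cset\<close> unfolding Cset_iff by presburger
  ultimately show "z \<in> insert (0, 0) (insert (1, 1) Cset)" by auto
next
  fix z
  assume z: "z \<in> insert (0, 0) (insert (1, 1) Cset)"
  obtain a b where z_ab: "z = (a, b)" by (cases z)
  have "(a = 0 \<and> b = 0) \<or> (a = 1 \<and> b = 1) \<or> ((a = 0 \<or> a = 1) \<and> b < 0 \<and> even (a + b))"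
    using z unfolding z_ab by (auto simp: Cset_iff)
  then have "(a, b - 2) \<in> Cset" unfolding Cset_iff by presburger
  then show "z \<in> shift_up Cset" unfolding z_ab by force
qed

section \<open>Measurability, stationarity and independence\<close>

abbreviation bern :: "real \<Rightarrow> bool measure" where
  "bern p \<equiv> measure_pmf (bernoulli_pmf p)"

lemma prob_space_perc: "prob_space (perc p)"
  unfolding perc_def by (rule prob_space_PiM) (rule prob_space_measure_pmf)

lemma pred_coordinate: "s \<in> I \<Longrightarrow> Measurable.pred (Pi\<^sub>M I (\<lambda>_. bern p)) (\<lambda>\<omega>. \<omega> s)"
  by (rule measurable_compose[OF measurable_component_singleton]) auto

lemma pred_site_open: "s \<in> Lat \<Longrightarrow> Measurable.pred (perc p) (\<lambda>\<omega>. \<omega> s)"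
  unfolding perc_def by (rule pred_coordinate)

definition lattice_paths :: "int \<times> int \<Rightarrow> int \<times> int \<Rightarrow> (int \<times> int) list set" where
  "lattice_paths z w = {zs. zs \<noteq> [] \<and> hd zs = z \<and> last zs = w \<and> set zs \<subseteq> Lat \<and>
      (\<forall>i. i + 1 < length zs \<longrightarrow> step_ok (zs ! i) (zs ! (i + 1)))}"

lemma reachable_iff_open_path:
  "reachable \<omega> z w \<longleftrightarrow> (\<exists>zs\<in>lattice_paths z w. \<forall>i\<in>{..<length zs - 1}. \<omega> (zs ! i))"
  unfolding reach_iff_reachable[symmetric] reach_def lattice_paths_def by auto

lemma pred_reachable: "Measurable.pred (perc p) (\<lambda>\<omega>. reachable \<omega> z w)"
  unfolding reachable_iff_open_path
proof (intro pred_intros_countable_bounded pred_intros_finite)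
  fix zs i
  assume "zs \<in> lattice_paths z w" "i \<in> {..<length zs - 1}"
  then have "zs ! i \<in> Lat" unfolding lattice_paths_def by (auto dest!: nth_mem[of i zs])
  then show "Measurable.pred (perc p) (\<lambda>\<omega>. \<omega> (zs ! i))" by (rule pred_site_open)
qed

lemma u_measurable[measurable]: "(\<lambda>\<omega>. u \<omega> A n) \<in> borel_measurable (perc p)"
proof -
  have "u \<omega> A n = (SUP x. if \<exists>z\<in>A. reachable \<omega> z (int n, x) then ereal (real_of_int x) else -\<infinity>)"
    (is "_ = (SUP x. ?f x)") for \<omega>
    unfolding u_def xi_reachable
  proof (rule antisym)
    show "(SUP x\<in>{x. \<exists>z\<in>A. reachable \<omega> z (int n, x)}. ereal (real_of_int x)) \<le> (SUP x. ?f x)"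
    proof (rule SUP_least)
      fix x
      assume "x \<in> {x. \<exists>z\<in>A. reachable \<omega> z (int n, x)}"
      then show "ereal (real_of_int x) \<le> (SUP x. ?f x)" by (intro SUP_upper2[of x]) auto
    qed
    show "(SUP x. ?f x) \<le> (SUP x\<in>{x. \<exists>z\<in>A. reachable \<omega> z (int n, x)}. ereal (real_of_int x))"
      by (rule SUP_least) (auto intro: SUP_upper)
  qed
  moreover have "Measurable.pred (perc p) (\<lambda>\<omega>. \<exists>z\<in>A. reachable \<omega> z (int n, x))" for x
    by (intro pred_intros_countable_bounded pred_reachable)
  ultimately show ?thesis
    by (simp only:) (intro borel_measurable_SUP measurable_If; simp add: Measurable.pred_def)
qed

lemma gap_measurable[measurable]:
  assumes "f \<in> borel_measurable M" "g \<in> borel_measurable M"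
  shows "(\<lambda>x. gap (f x) (g x)) \<in> borel_measurable M"
  unfolding gap_def using assms by measurable

lemma vshift_measurable[measurable]: "vshift \<in> measurable (perc p) (perc p)"
  unfolding vshift_def perc_def
proof (rule measurable_restrict)
  fix s
  assume "s \<in> Lat"
  then have "(fst s, snd s + 2) \<in> Lat" using Lat_shift[of "fst s" "snd s"] by simp
  then show "(\<lambda>\<omega>. \<omega> (fst s, snd s + 2)) \<in> measurable (Pi\<^sub>M Lat (\<lambda>_. bern p)) (bern p)"
    by (rule measurable_component_singleton)
qed

lemma distr_vshift: "distr (perc p) (perc p) vshift = perc p"
proof -
  have "distr (Pi\<^sub>M Lat (\<lambda>_. bern p)) (Pi\<^sub>M Lat (\<lambda>_. bern p))
      (\<lambda>\<omega>. \<lambda>s\<in>Lat. \<omega> ((\<lambda>s. (fst s, snd s + 2)) s)) = Pi\<^sub>M Lat (\<lambda>_. bern p)"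
  proof (rule distr_PiM_reindex)
    show "inj_on (\<lambda>s. (fst s, snd s + 2)) Lat" by (auto simp: inj_on_def)
    show "(\<lambda>s. (fst s, snd s + 2)) \<in> Lat \<rightarrow> Lat" using Lat_shift by auto
  qed (rule prob_space_measure_pmf)
  then show ?thesis unfolding perc_def vshift_def by simp
qed

lemma nn_integral_perc_split_site:
  fixes g :: "(int \<times> int \<Rightarrow> bool) \<Rightarrow> ennreal"
  assumes s: "s \<in> Lat" and g[measurable]: "g \<in> borel_measurable (perc p)"
  shows "(\<integral>\<^sup>+ \<omega>. g \<omega> \<partial>perc p)
       = (\<integral>\<^sup>+ b. (\<integral>\<^sup>+ X. g (fun_upd X s b) \<partial>Pi\<^sub>M (Lat - {s}) (\<lambda>_. bern p)) \<partial>bern p)"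
proof -
  define N where "N = Pi\<^sub>M (Lat - {s}) (\<lambda>_. bern p)"
  define T :: "bool \<times> (int \<times> int \<Rightarrow> bool) \<Rightarrow> int \<times> int \<Rightarrow> bool"
    where "T = (\<lambda>z. fun_upd (snd z) s (fst z))"
  interpret N: prob_space N
    unfolding N_def by (rule prob_space_PiM) (rule prob_space_measure_pmf)
  have perc_eq: "perc p = Pi\<^sub>M (insert s (Lat - {s})) (\<lambda>_. bern p)"
    unfolding perc_def using s by (simp add: insert_absorb)
  have T: "T \<in> measurable (bern p \<Otimes>\<^sub>M N) (perc p)"
    unfolding T_def perc_eq N_def by (rule measurable_fun_upd[where J="Lat - {s}"]) auto
  have "distr (bern p \<Otimes>\<^sub>M N) (perc p) (\<lambda>(b, X). fun_upd X s b) = perc p"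
    unfolding perc_eq N_def by (rule distr_pair_PiM_eq_PiM) (rule prob_space_measure_pmf)+
  moreover have "(\<lambda>(b, X). fun_upd X s b) = T" unfolding T_def by auto
  ultimately have "distr (bern p \<Otimes>\<^sub>M N) (perc p) T = perc p" by simp
  then have "(\<integral>\<^sup>+ \<omega>. g \<omega> \<partial>perc p) = (\<integral>\<^sup>+ z. g (T z) \<partial>(bern p \<Otimes>\<^sub>M N))"
    using nn_integral_distr[OF T, of g] by simp
  also have "\<dots> = (\<integral>\<^sup>+ b. (\<integral>\<^sup>+ X. g (T (b, X)) \<partial>N) \<partial>bern p)"
    using measurable_compose[OF T g] by (intro N.nn_integral_fst[symmetric]) simp
  finally show ?thesis unfolding T_def N_def by simp
qed

lemma nn_integral_bern_indicator:
  assumes "0 \<le> p" "p \<le> 1"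
  shows "(\<integral>\<^sup>+ b. (if b then c else 0) \<partial>bern p) = ennreal p * c"
proof -
  have "(\<integral>\<^sup>+ b. (if b then c else 0) \<partial>bern p) = (\<integral>\<^sup>+ b. c * indicator {True} b \<partial>bern p)"
    by (intro nn_integral_cong) (auto simp: indicator_def)
  also have "\<dots> = c * emeasure (bern p) {True}" by simp
  also have "\<dots> = ennreal p * c" using assms by (simp add: emeasure_pmf_single mult.commute)
  finally show ?thesis .
qed

lemma nn_integral_site_open_times:
  fixes f :: "(int \<times> int \<Rightarrow> bool) \<Rightarrow> ennreal"
  assumes p: "0 \<le> p" "p \<le> 1" and s: "s \<in> Lat"
    and f[measurable]: "f \<in> borel_measurable (perc p)"
    and f_inv: "\<And>\<omega> b. f (fun_upd \<omega> s b) = f \<omega>"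
  shows "(\<integral>\<^sup>+ \<omega>. (if \<omega> s then f \<omega> else 0) \<partial>perc p) = ennreal p * (\<integral>\<^sup>+ \<omega>. f \<omega> \<partial>perc p)"
proof -
  let ?N = "Pi\<^sub>M (Lat - {s}) (\<lambda>_. bern p)"
  have [measurable]: "Measurable.pred (perc p) (\<lambda>\<omega>. \<omega> s)" using s by (rule pred_site_open)
  have "(\<integral>\<^sup>+ \<omega>. (if \<omega> s then f \<omega> else 0) \<partial>perc p)
      = (\<integral>\<^sup>+ b. (if b then \<integral>\<^sup>+ X. f X \<partial>?N else 0) \<partial>bern p)"
    using s by (subst nn_integral_perc_split_site) (auto simp: f_inv intro!: nn_integral_cong)
  also have "\<dots> = ennreal p * (\<integral>\<^sup>+ X. f X \<partial>?N)" using p by (rule nn_integral_bern_indicator)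
  also have "(\<integral>\<^sup>+ X. f X \<partial>?N) = (\<integral>\<^sup>+ \<omega>. f \<omega> \<partial>perc p)"
    using s by (subst nn_integral_perc_split_site) (auto simp: f_inv measure_pmf.emeasure_space_1)
  finally show ?thesis .
qed

lemma sets_all_open:
  assumes "J \<subseteq> I" "finite J"
  shows "{\<omega> \<in> space (Pi\<^sub>M I (\<lambda>_. bern p)). \<forall>s\<in>J. \<omega> s} \<in> sets (Pi\<^sub>M I (\<lambda>_. bern p))"
  using assms pred_coordinate[of _ I p]
  by (intro sets.sets_Collect_finite_All) (auto simp: Measurable.pred_def)

lemma prob_all_open:
  assumes p: "0 \<le> p" "p \<le> 1" and J: "J \<subseteq> Lat" "finite J"
  shows "measure (perc p) {\<omega> \<in> space (perc p). \<forall>s\<in>J. \<omega> s} = p ^ card J"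
proof -
  interpret P: prob_space "perc p" by (rule prob_space_perc)
  have "{\<omega> \<in> space (perc p). \<forall>s\<in>J. \<omega> s} = prod_emb Lat (\<lambda>_. bern p) J (Pi\<^sub>E J (\<lambda>_. {True}))"
    unfolding perc_def
    by (auto simp: prod_emb_iff restrict_PiE_iff space_PiM PiE_def fun_eq_iff restrict_def) metis
  also have "emeasure (perc p) \<dots> = (\<Prod>s\<in>J. emeasure (bern p) {True})"
    unfolding perc_def by (rule emeasure_PiM_emb) (use J in \<open>auto intro: prob_space_measure_pmf\<close>)
  also have "\<dots> = ennreal (p ^ card J)"
    using p by (simp add: emeasure_pmf_single prod_ennreal[symmetric] ennreal_power)
  finally show ?thesis using p by (simp add: P.emeasure_eq_measure)
qed

lemma indep_sites: "prob_space.indep_vars (perc p) (\<lambda>_. bern p) (\<lambda>s \<omega>. \<omega> s) Lat"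
proof -
  interpret P: prob_space "perc p" by (rule prob_space_perc)
  have "distr (perc p) (Pi\<^sub>M Lat (\<lambda>_. bern p)) (\<lambda>\<omega>. \<lambda>s\<in>Lat. \<omega> s) = distr (perc p) (perc p) (\<lambda>\<omega>. \<omega>)"
    by (rule distr_cong) (auto simp: perc_def space_PiM PiE_def extensional_restrict)
  also have "\<dots> = Pi\<^sub>M Lat (\<lambda>s. distr (perc p) (bern p) (\<lambda>\<omega>. \<omega> s))"
    unfolding perc_def distr_id
    by (rule PiM_cong) (auto intro!: distr_PiM_component[symmetric] prob_space_measure_pmf)
  moreover have "(\<lambda>\<omega>. \<omega> s) \<in> measurable (perc p) (bern p)" if "s \<in> Lat" for s
    unfolding perc_def using that by (rule measurable_component_singleton)
  ultimately show ?thesis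
    using origin_Lat by (subst P.indep_vars_iff_distr_eq_PiM') auto
qed

lemma prob_no_block_open:
  assumes p: "0 \<le> p" "p \<le> 1"
    and S: "\<And>k. k < K \<Longrightarrow> S k \<subseteq> Lat \<and> finite (S k) \<and> card (S k) = m"
    and disj: "disjoint_family_on S {..<K}"
  shows "measure (perc p) {\<omega> \<in> space (perc p). \<forall>k<K. \<not> (\<forall>s\<in>S k. \<omega> s)} = (1 - p ^ m) ^ K"
proof (cases "K = 0")
  case True
  interpret P: prob_space "perc p" by (rule prob_space_perc)
  show ?thesis using True by (simp add: P.prob_space)
next
  case False
  interpret P: prob_space "perc p" by (rule prob_space_perc)
  define X where "X k \<omega> = restrict \<omega> (S k)" for k and \<omega> :: "int \<times> int \<Rightarrow> bool"
  define B where "B k = {Y \<in> space (Pi\<^sub>M (S k) (\<lambda>_. bern p)). \<not> (\<forall>s\<in>S k. Y s)}" for k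
  have indep: "P.indep_vars (\<lambda>k. Pi\<^sub>M (S k) (\<lambda>_. bern p)) X {..<K}"
    unfolding X_def by (rule P.indep_vars_restrict[OF indep_sites]) (use S disj in auto)
  have B: "B k \<in> sets (Pi\<^sub>M (S k) (\<lambda>_. bern p))" if "k < K" for k
  proof -
    have "{Y \<in> space (Pi\<^sub>M (S k) (\<lambda>_. bern p)). \<forall>s\<in>S k. Y s} \<in> sets (Pi\<^sub>M (S k) (\<lambda>_. bern p))"
      using S[OF that] by (intro sets_all_open) auto
    then show ?thesis unfolding B_def by (rule sets.sets_Collect_neg)
  qed
  have preimage: "X k -` B k \<inter> space (perc p) = space (perc p) - {\<omega> \<in> space (perc p). \<forall>s\<in>S k. \<omega> s}" for k
    unfolding X_def B_def perc_def by (auto simp: space_PiM PiE_iff)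
  have "P.prob (\<Inter>k\<in>{..<K}. X k -` B k \<inter> space (perc p)) = (\<Prod>k\<in>{..<K}. P.prob (X k -` B k \<inter> space (perc p)))"
    using False B by (intro P.indep_varsD[OF indep]) auto
  also have "\<dots> = (\<Prod>k\<in>{..<K}. 1 - p ^ m)"
    using S by (intro prod.cong) (auto simp: preimage P.prob_compl sets_all_open[where I=Lat, folded perc_def] prob_all_open[OF p])
  also have "(\<Inter>k\<in>{..<K}. X k -` B k \<inter> space (perc p)) = {\<omega> \<in> space (perc p). \<forall>k<K. \<not> (\<forall>s\<in>S k. \<omega> s)}"
    unfolding preimage using False by auto
  finally show ?thesis by simp
qed

section \<open>Lower tail of the front of the half column\<close>

definition diagonal :: "nat \<Rightarrow> nat \<Rightarrow> (int \<times> int) set" where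
  "diagonal n k = (\<lambda>i. (i, -2 - 2 * int k + i)) ` {0..<int n}"

lemma diagonal_Lat: "diagonal n k \<subseteq> Lat \<and> finite (diagonal n k) \<and> card (diagonal n k) = n"
proof -
  have "inj_on (\<lambda>i. (i, -2 - 2 * int k + i)) {0..<int n}" by (auto simp: inj_on_def)
  then show ?thesis unfolding diagonal_def Lat_def by (auto simp: card_image)
qed

lemma u_Cset_ge_if_diagonal_open:
  assumes "k < K" "\<forall>s\<in>diagonal n k. \<omega> s"
  shows "ereal (- (2 * real K)) \<le> u \<omega> Cset n"
proof -
  have "reachable \<omega> (0, -2 - 2 * int k) (int n, -2 - 2 * int k + int n)"
    using assms(2) by (intro reachable_diagonal) (auto simp: diagonal_def)
  then have "ereal (real_of_int (-2 - 2 * int k + int n)) \<le> u \<omega> Cset n"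
    by (rule u_upper[rotated]) (simp add: Cset_iff)
  moreover have "- (2 * real K) \<le> real_of_int (-2 - 2 * int k + int n)" using assms(1) by simp
  ultimately show ?thesis by (meson ereal_less_eq(3) order_trans)
qed

text \<open>If one of the \<open>K\<close> disjoint diagonals is open then \<open>u\<^sup>n\<^sub>C \<ge> -2K\<close>, and all of them are
  blocked with probability \<open>(1 - p^n)^K\<close>.\<close>
lemma emeasure_u_Cset_below:
  assumes p: "0 \<le> p" "p \<le> 1"
  shows "emeasure (perc p) {\<omega> \<in> space (perc p). u \<omega> Cset n < ereal (- (2 * real K))}
          \<le> ennreal ((1 - p ^ n) ^ K)"
proof -
  interpret P: prob_space "perc p" by (rule prob_space_perc)
  define E where "E = {\<omega> \<in> space (perc p). \<forall>k<K. \<not> (\<forall>s\<in>diagonal n k. \<omega> s)}"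
  have "disjoint_family_on (diagonal n) {..<K}" unfolding disjoint_family_on_def diagonal_def by auto
  then have prob_E: "measure (perc p) E = (1 - p ^ n) ^ K"
    unfolding E_def using diagonal_Lat by (intro prob_no_block_open[OF p]) auto
  have "{\<omega> \<in> space (perc p). \<forall>k\<in>{..<K}. \<not> (\<forall>s\<in>diagonal n k. \<omega> s)} \<in> sets (perc p)"
    using diagonal_Lat pred_site_open[of _ p]
    by (intro sets.sets_Collect_finite_All sets.sets_Collect_neg)
      (auto simp: Measurable.pred_def dest: subsetD[OF diagonal_Lat[THEN conjunct1]])
  then have "E \<in> sets (perc p)" unfolding E_def by (simp only: Ball_def lessThan_iff)
  moreover have "{\<omega> \<in> space (perc p). u \<omega> Cset n < ereal (- (2 * real K))} \<subseteq> E"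
    unfolding E_def using u_Cset_ge_if_diagonal_open[of _ K n] by (force simp: not_le[symmetric])
  ultimately have "emeasure (perc p) {\<omega> \<in> space (perc p). u \<omega> Cset n < ereal (- (2 * real K))}
      \<le> emeasure (perc p) E"
    by (intro emeasure_mono)
  then show ?thesis by (simp add: P.emeasure_eq_measure prob_E)
qed

section \<open>Mean increment under a measure-preserving map\<close>

lemma le_of_le_plus_geometric:
  fixes a b :: ennreal
  assumes "0 \<le> q" "q < 1" and le: "\<And>K. a \<le> b + ennreal (c * q ^ K)"
  shows "a \<le> b"
proof -
  have "(\<lambda>K. b + ennreal (c * q ^ K)) \<longlonglongrightarrow> b + ennreal (c * 0)"
    using assms(1,2) by (intro tendsto_add tendsto_const tendsto_ennrealI tendsto_mult LIMSEQ_power_zero) auto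
  then show ?thesis using le by (intro LIMSEQ_le_const) auto
qed

definition trunc_at :: "real \<Rightarrow> ereal \<Rightarrow> ennreal" where
  "trunc_at L a = e2ennreal (max a (ereal (- L)) + ereal L)"

lemma trunc_at_measurable[measurable]:
  "f \<in> borel_measurable M \<Longrightarrow> (\<lambda>x. trunc_at L (f x)) \<in> borel_measurable M"
  unfolding trunc_at_def
  by (intro measurable_compose[OF _ measurable_e2ennreal] borel_measurable_ereal_add borel_measurable_max)
    simp_all

lemma trunc_at_le: "a \<le> ereal c \<Longrightarrow> trunc_at L a \<le> ennreal (max c (- L) + L)"
  unfolding trunc_at_def by (cases a) (auto intro: e2ennreal_mono simp: max_def)

lemma trunc_at_plus_le:
  assumes "a \<le> a' + ereal d" "a' < \<infinity>" "0 \<le> L" "0 \<le> d"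
  shows "trunc_at L a' + ennreal d
      \<le> trunc_at L a + gap a (a' + ereal d) + (if a' < ereal (- L) then ennreal d else 0)"
proof (cases "a' < ereal (- L)")
  case True
  then have "trunc_at L a' = 0" unfolding trunc_at_def by (simp add: max_absorb2)
  then show ?thesis using True by (simp add: add_increasing)
next
  case False
  then obtain r where r: "a' = ereal r" "- L \<le> r" using assms(2) by (cases a') auto
  show ?thesis
  proof (cases a)
    case (real x)
    have "trunc_at L a' + ennreal d = ennreal (r + L + d)"
      unfolding trunc_at_def using r assms(4) by (simp add: max_def ennreal_plus)
    also have "\<dots> \<le> ennreal (max x (- L) + L + (r + d - x))"
      by (rule ennreal_leI) auto
    also have "\<dots> = trunc_at L a + gap a (a' + ereal d)"
      unfolding trunc_at_def gap_def using real r assms by (subst ennreal_plus) (auto simp: max_def)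
    finally show ?thesis by (simp add: add_increasing2)
  qed (use assms r in \<open>auto simp: gap_def\<close>)
qed

text \<open>If \<open>T\<close> preserves \<open>M\<close> then \<open>f\<close> and \<open>f \<circ> T\<close> have the same mean, so the mean increment of
  \<open>f \<circ> T + d\<close> over \<open>f\<close> is \<open>d\<close>. Since \<open>f\<close> need not be integrable, it is truncated below at \<open>-L\<close>,
  at the cost of the event \<open>f < -L\<close>.\<close>
lemma measure_preserving_gap_lower_bound:
  assumes "prob_space M" and T: "T \<in> measurable M M" "distr M M T = M"
    and f[measurable]: "f \<in> borel_measurable M"
    and upper: "\<And>\<omega>. \<omega> \<in> space M \<Longrightarrow> f \<omega> \<le> ereal c"
    and below_shift: "\<And>\<omega>. \<omega> \<in> space M \<Longrightarrow> f \<omega> \<le> f (T \<omega>) + ereal d"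
    and "0 \<le> d" "0 \<le> L"
  shows "ennreal d \<le> (\<integral>\<^sup>+ \<omega>. gap (f \<omega>) (f (T \<omega>) + ereal d) \<partial>M)
                      + ennreal d * emeasure M {\<omega> \<in> space M. f \<omega> < ereal (- L)}"
proof -
  interpret prob_space M by fact
  define tr where "tr \<omega> = trunc_at L (f \<omega>)" for \<omega>
  define g where "g \<omega> = gap (f \<omega>) (f (T \<omega>) + ereal d)" for \<omega>
  define E where "E = {\<omega> \<in> space M. f \<omega> < ereal (- L)}"
  have [measurable]: "T \<in> measurable M M" "tr \<in> borel_measurable M" "g \<in> borel_measurable M"
    "E \<in> sets M"
    using T unfolding tr_def g_def E_def by measurable
  have T_E: "T -` E \<inter> space M = {\<omega> \<in> space M. f (T \<omega>) < ereal (- L)}"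
    using measurable_space[OF T(1)] unfolding E_def by auto
  have "(\<integral>\<^sup>+ \<omega>. tr \<omega> \<partial>M) + ennreal d = (\<integral>\<^sup>+ \<omega>. tr (T \<omega>) + ennreal d \<partial>M)"
    using nn_integral_distr[OF T(1), of tr] T(2)
    by (simp add: nn_integral_add emeasure_space_1)
  also have "\<dots> \<le> (\<integral>\<^sup>+ \<omega>. tr \<omega> + g \<omega> + ennreal d * indicator (T -` E \<inter> space M) \<omega> \<partial>M)"
  proof (rule nn_integral_mono)
    fix \<omega>
    assume \<omega>: "\<omega> \<in> space M"
    have "f (T \<omega>) \<le> ereal c" using \<omega> upper measurable_space[OF T(1)] by blast
    then have "f (T \<omega>) < \<infinity>" using le_less_trans by fastforce
    moreover have "ennreal d * indicator (T -` E \<inter> space M) \<omega>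
        = (if f (T \<omega>) < ereal (- L) then ennreal d else 0)"
      using \<omega> unfolding T_E by (simp add: indicator_def)
    ultimately show "tr (T \<omega>) + ennreal d \<le> tr \<omega> + g \<omega> + ennreal d * indicator (T -` E \<inter> space M) \<omega>"
      using trunc_at_plus_le[OF below_shift[OF \<omega>] _ \<open>0 \<le> L\<close> \<open>0 \<le> d\<close>]
      unfolding tr_def g_def by simp
  qed
  also have "\<dots> = (\<integral>\<^sup>+ \<omega>. tr \<omega> \<partial>M) + ((\<integral>\<^sup>+ \<omega>. g \<omega> \<partial>M) + ennreal d * emeasure M E)"
  proof -
    have "emeasure M (T -` E \<inter> space M) = emeasure M E"
      using emeasure_distr[OF T(1), of E] T(2) by simp
    then show ?thesis by (simp add: nn_integral_add nn_integral_cmult_indicator add.assoc)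
  qed
  finally have "(\<integral>\<^sup>+ \<omega>. tr \<omega> \<partial>M) + ennreal d
      \<le> (\<integral>\<^sup>+ \<omega>. tr \<omega> \<partial>M) + ((\<integral>\<^sup>+ \<omega>. g \<omega> \<partial>M) + ennreal d * emeasure M E)" .
  moreover have "(\<integral>\<^sup>+ \<omega>. tr \<omega> \<partial>M) \<le> (\<integral>\<^sup>+ \<omega>. ennreal (max c (- L) + L) \<partial>M)"
    using upper unfolding tr_def by (intro nn_integral_mono trunc_at_le)
  then have "(\<integral>\<^sup>+ \<omega>. tr \<omega> \<partial>M) \<noteq> \<infinity>"
    using ennreal_less_top by (auto simp: emeasure_space_1 top_unique)
  ultimately show ?thesis unfolding g_def E_def by (simp add: ennreal_add_left_cancel_le)
qed

lemma expected_shift_gap_ge_two: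
  assumes p: "0 < p" "p \<le> 1"
  shows "2 \<le> (\<integral>\<^sup>+ \<omega>. gap (u \<omega> Cset n) (u (vshift \<omega>) Cset n + 2) \<partial>perc p)"
proof (rule le_of_le_plus_geometric)
  show q: "0 \<le> 1 - p ^ n" "1 - p ^ n < 1"
    using p by (auto simp: power_le_one)
  fix K
  have "u \<omega> Cset n \<le> ereal (real n)" for \<omega>
    using u_le[of Cset 0 \<omega> n] Cset_bound by simp
  moreover have "u \<omega> Cset n \<le> u \<omega> (shift_up Cset) n" for \<omega>
    by (rule u_mono) (auto simp: shift_up_Cset)
  ultimately have "ennreal 2 \<le> (\<integral>\<^sup>+ \<omega>. gap (u \<omega> Cset n) (u (vshift \<omega>) Cset n + ereal 2) \<partial>perc p)
      + ennreal 2 * emeasure (perc p) {\<omega> \<in> space (perc p). u \<omega> Cset n < ereal (- (2 * real K))}"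
    by (intro measure_preserving_gap_lower_bound[where c="real n"] prob_space_perc distr_vshift)
      (auto simp: u_shift_up)
  also have "\<dots> \<le> (\<integral>\<^sup>+ \<omega>. gap (u \<omega> Cset n) (u (vshift \<omega>) Cset n + ereal 2) \<partial>perc p)
      + ennreal 2 * ennreal ((1 - p ^ n) ^ K)"
    using p by (intro add_left_mono mult_left_mono emeasure_u_Cset_below) auto
  finally show "2 \<le> (\<integral>\<^sup>+ \<omega>. gap (u \<omega> Cset n) (u (vshift \<omega>) Cset n + 2) \<partial>perc p)
      + ennreal (2 * (1 - p ^ n) ^ K)"
    using q by (simp add: ennreal_mult)
qed

section \<open>Adding the origin\<close>

lemma origin_succs: "{z. step_ok (0, 0) z} = {(1, 1), (2, 0), (1, -1)}"
  by (auto simp: step_ok_iff)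

lemma u_origin:
  assumes "1 \<le> n"
  shows "u \<omega> {(0, 0)} n = (if \<omega> (0, 0) then u \<omega> {z. step_ok (0, 0) z} n else -\<infinity>)"
  using assms by (intro u_singleton origin_Lat) simp

definition origin_gain :: "nat \<Rightarrow> (int \<times> int \<Rightarrow> bool) \<Rightarrow> ennreal" where
  "origin_gain n \<omega> = gap (u \<omega> Cset n) (u \<omega> (Cset \<union> {z. step_ok (0, 0) z}) n)"

lemma origin_gain_measurable[measurable]: "origin_gain n \<in> borel_measurable (perc p)"
  unfolding origin_gain_def[abs_def] by measurable

lemma Cset_origin_succs_bound: "z \<in> Cset \<union> {z. step_ok (0, 0) z} \<Longrightarrow> 0 \<le> fst z \<and> snd z \<le> 1"
  using Cset_bound[of z] by (auto simp: origin_succs)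

lemma incr_Cset:
  assumes "1 \<le> n"
  shows "incr \<omega> Cset n = (if \<omega> (0, 0) then origin_gain n \<omega> else 0)"
proof -
  have "u \<omega> Cset n < \<infinity>" using Cset_bound by (rule u_less_top)
  then show ?thesis
    unfolding incr_eq_gap origin_gain_def u_Un u_origin[OF assms] by (simp add: gap_self)
qed

lemma origin_gain_fun_upd: "origin_gain n (fun_upd \<omega> (0, 0) b) = origin_gain n \<omega>"
proof -
  have "z \<noteq> (0, 0) \<and> 0 \<le> fst z" if "z \<in> Cset \<union> {z. step_ok (0, 0) z}" for z
    using that Cset_bound[of z] by (cases z) (auto simp: Cset_iff origin_succs)
  then show ?thesis unfolding origin_gain_def by (subst (1 2) u_fun_upd) auto
qed

lemma shift_gap_le_origin_gain:
  assumes "1 \<le> n"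
  shows "gap (u \<omega> Cset n) (u (vshift \<omega>) Cset n + 2) \<le> origin_gain n \<omega>"
  unfolding origin_gain_def
proof (rule gap_mono)
  have shift_up_eq: "shift_up Cset = {(0, 0)} \<union> ({(1, 1)} \<union> Cset)"
    by (auto simp: shift_up_Cset)
  show "u \<omega> Cset n \<le> u (vshift \<omega>) Cset n + 2"
    unfolding u_shift_up[symmetric] by (rule u_mono) (auto simp: shift_up_Cset)
  have "u \<omega> {(0, 0)} n \<le> u \<omega> {z. step_ok (0, 0) z} n"
    unfolding u_origin[OF assms] by simp
  also have "\<dots> \<le> u \<omega> (Cset \<union> {z. step_ok (0, 0) z}) n"
    by (rule u_mono) auto
  finally have "u \<omega> {(0, 0)} n \<le> u \<omega> (Cset \<union> {z. step_ok (0, 0) z}) n" .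
  moreover have "u \<omega> ({(1, 1)} \<union> Cset) n \<le> u \<omega> (Cset \<union> {z. step_ok (0, 0) z}) n"
    by (rule u_mono) (auto simp: origin_succs)
  ultimately show "u (vshift \<omega>) Cset n + 2 \<le> u \<omega> (Cset \<union> {z. step_ok (0, 0) z}) n"
    unfolding u_shift_up[symmetric] shift_up_eq u_Un[of \<omega> "{(0, 0)}"] by (rule max.boundedI)
  show "u \<omega> (Cset \<union> {z. step_ok (0, 0) z}) n < \<infinity>"
    using Cset_origin_succs_bound by (rule u_less_top)
qed

lemma incr_antimono:
  assumes "B \<subseteq> A" "\<And>z. z \<in> A \<Longrightarrow> 0 \<le> fst z \<and> snd z \<le> c"
  shows "incr \<omega> A n \<le> incr \<omega> B n"
proof -
  have "u \<omega> A n < \<infinity>" using assms(2) by (rule u_less_top)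
  moreover have "u \<omega> {(0, 0)} n < \<infinity>" by (rule u_less_top[where c=0]) auto
  ultimately show ?thesis
    unfolding incr_eq_gap u_Un using u_mono[OF assms(1)] by (intro gap_max_antimono)
qed

lemma incr_at_time_zero:
  assumes "A \<subseteq> Cset"
  shows "2 \<le> incr \<omega> A 0"
proof -
  have "u \<omega> A 0 \<le> - 2"
    unfolding u_def xi_reachable
  proof (rule Sup_least, clarify)
    fix x z
    assume z: "z \<in> A" "reachable \<omega> z (int 0, x)"
    with assms have "z \<in> Cset" by auto
    with reachable_bounds[OF z(2)] Cset_bound[of z] have "(0, x) \<in> Cset" by auto
    then have "x \<le> - 2" unfolding Cset_iff by presburger
    then show "ereal (real_of_int x) \<le> - 2" by simp
  qed
  moreover have "0 \<le> u \<omega> (A \<union> {(0, 0)}) 0"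
    using u_upper[of "(0, 0)" "A \<union> {(0, 0)}" \<omega> 0 0] by (simp add: reachable.refl origin_Lat zero_ereal_def)
  ultimately have "u \<omega> A 0 + ereal 2 \<le> u \<omega> (A \<union> {(0, 0)}) 0"
    using add_right_mono[of "u \<omega> A 0" "- 2" "ereal 2"] by (simp add: zero_ereal_def order_trans)
  moreover have "u \<omega> (A \<union> {(0, 0)}) 0 \<noteq> -\<infinity>"
    using \<open>0 \<le> u \<omega> (A \<union> {(0, 0)}) 0\<close> by auto
  ultimately show ?thesis unfolding incr_eq_gap using gap_lower_bound[of "u \<omega> A 0" 2] by simp
qed

lemma expected_incr_Cset_ge:
  assumes "0 \<le> p" "p \<le> 1"
  shows "ennreal (2 * p) \<le> (\<integral>\<^sup>+ \<omega>. incr \<omega> Cset n \<partial>perc p)"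
proof -
  interpret prob_space "perc p" by (rule prob_space_perc)
  consider "n = 0" | "p = 0" | "1 \<le> n" "0 < p" using assms(1) by linarith
  then show ?thesis
  proof cases
    case 1
    have "ennreal (2 * p) \<le> (\<integral>\<^sup>+ \<omega>. 2 \<partial>perc p)"
      using assms(2) ennreal_leI[of "2 * p" 2] by (simp add: emeasure_space_1)
    also have "\<dots> \<le> (\<integral>\<^sup>+ \<omega>. incr \<omega> Cset n \<partial>perc p)"
      using 1 incr_at_time_zero[OF order_refl] by (intro nn_integral_mono) simp
    finally show ?thesis .
  next
    case 2
    then show ?thesis by simp
  next
    case 3
    have "ennreal (2 * p) = ennreal p * 2"
      using assms(1) by (simp add: ennreal_mult mult.commute)
    also have "\<dots> \<le> ennreal p * (\<integral>\<^sup>+ \<omega>. gap (u \<omega> Cset n) (u (vshift \<omega>) Cset n + 2) \<partial>perc p)"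
      using 3 assms(2) by (intro mult_left_mono expected_shift_gap_ge_two) auto
    also have "\<dots> \<le> ennreal p * (\<integral>\<^sup>+ \<omega>. origin_gain n \<omega> \<partial>perc p)"
      using 3 by (intro mult_left_mono nn_integral_mono shift_gap_le_origin_gain) auto
    also have "\<dots> = (\<integral>\<^sup>+ \<omega>. incr \<omega> Cset n \<partial>perc p)"
      using assms origin_Lat origin_gain_fun_upd
      by (simp add: incr_Cset[OF 3(1)] nn_integral_site_open_times)
    finally show ?thesis .
  qed
qed

theorem lemma2p3:
  fixes p :: real and A B :: "(int \<times> int) set" and n :: nat
  assumes "0 \<le> p" "p \<le> 1"
    and "B \<subseteq> A" "A \<subseteq> Cset" "infinite A" "infinite B"
  shows "(\<integral>\<^sup>+ \<omega>. incr \<omega> B n \<partial>perc p) \<ge> (\<integral>\<^sup>+ \<omega>. incr \<omega> A n \<partial>perc p)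
       \<and> (\<integral>\<^sup>+ \<omega>. incr \<omega> A n \<partial>perc p) \<ge> ennreal (2 * p)"
proof
  \<comment> \<open>The bounds hold for every \<open>B \<subseteq> A \<subseteq> Cset\<close>.\<close>
  show "(\<integral>\<^sup>+ \<omega>. incr \<omega> A n \<partial>perc p) \<le> (\<integral>\<^sup>+ \<omega>. incr \<omega> B n \<partial>perc p)"
    using assms(3,4) Cset_bound by (intro nn_integral_mono incr_antimono) auto
  have "ennreal (2 * p) \<le> (\<integral>\<^sup>+ \<omega>. incr \<omega> Cset n \<partial>perc p)"
    using assms(1,2) by (rule expected_incr_Cset_ge)
  also have "\<dots> \<le> (\<integral>\<^sup>+ \<omega>. incr \<omega> A n \<partial>perc p)"
    using assms(4) Cset_bound by (intro nn_integral_mono incr_antimono)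
  finally show "ennreal (2 * p) \<le> (\<integral>\<^sup>+ \<omega>. incr \<omega> A n \<partial>perc p)" .
qed

end
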